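(* Let $A \in \mathbb{R}^{n \times m}$, let $x \in \mathbb{R}^m$ have support $\mathcal{N}$, let $y := Ax$, and let $\mathcal{T} \subseteq \{1,\dots,m\}$ with $|\mathcal{T}| = k$, and set $\Delta_u := \mathcal{N} \setminus \mathcal{T}$, $u := |\Delta_u|$. Suppose the partial RIC $\delta_{2u}^{k}$ of $A$ exists (in particular $A_{\mathcal{T}'}$ has full column rank for every $\mathcal{T}'$ with $|\mathcal{T}'| = k$) and satisfies $\delta_{2u}^{k} < \sqrt{2} - 1$. Then $x$ is the unique solution of the modified-CS program $\min_b \|b_{\mathcal{T}^c}\|_1$ subject to $y = Ab$.
   Context: For a vector $v$ and index set $S$, $v_S$ denotes the subvector indexed by $S$; for a matrix $A$, $A_S$ denotes the submatrix of columns indexed by $S$; $\mathcal{T}^c$ is the complement of $\mathcal{T}$ in $\{1,\dots,m\}$. For a set $\mathcal{T}$ with $A_{\mathcal{T}}$ of full column rank, $\mathcal{P}_{\mathcal{T},\perp} := I - A_{\mathcal{T}}(A_{\mathcal{T}}'A_{\mathcal{T}})^{-1}A_{\mathcal{T}}'$. The partial RIC $\delta_u^{k}$ of $A$ is defined when $A_{\mathcal{T}}$ has full column rank for every set $\mathcal{T}$ of size $k$, as the smallest real number $\delta$ such that $(1-\delta)\|b\|_2^2 \le \|\mathcal{P}_{\mathcal{T},\perp} A_{\mathcal{T}^c} b\|_2^2 \le (1+\delta)\|b\|_2^2$ for all sets $\mathcal{T}$ of size $k$ and all vectors $b \in \mathbb{R}^{m-k}$ with at most $u$ nonzero entries. 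*)

theory Defs
  imports "HOL-Analysis.Analysis"
begin

text \<open>Matrices A in R^(n x m) are represented as real^'m^'n (rows indexed by 'n,
columns by 'm); column index sets are subsets of UNIV :: 'm set.\<close>

text \<open>A_S b for b supported on S: the linear combination of the columns indexed by S.\<close>
definition colcomb :: "real^'m^'n \<Rightarrow> 'm set \<Rightarrow> ('m \<Rightarrow> real) \<Rightarrow> real^'n" where
  "colcomb A S b = (\<Sum>j\<in>S. b j *\<^sub>R column j A)"

definition full_col_rank :: "real^'m^'n \<Rightarrow> 'm set \<Rightarrow> bool" where
  "full_col_rank A S \<longleftrightarrow> (\<forall>c. colcomb A S c = 0 \<longrightarrow> (\<forall>j\<in>S. c j = 0))"

text \<open>P_{T,perp} v = v - A_T (A_T' A_T)^{-1} A_T' v, where c = (A_T' A_T)^{-1} A_T' v is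
the unique solution (supported on T) of the normal equations A_T' A_T c = A_T' v.\<close>
definition proj_perp :: "real^'m^'n \<Rightarrow> 'm set \<Rightarrow> real^'n \<Rightarrow> real^'n" where
  "proj_perp A T v =
     v - colcomb A T (THE c. (\<forall>j. j \<notin> T \<longrightarrow> c j = 0) \<and>
                            (\<forall>i\<in>T. inner (column i A) (colcomb A T c) = inner (column i A) v))"

definition partial_RIC_exists :: "real^'m^'n \<Rightarrow> nat \<Rightarrow> bool" where
  "partial_RIC_exists A k \<longleftrightarrow> (\<forall>T::'m set. card T = k \<longrightarrow> full_col_rank A T)"

definition partial_RIC_ok :: "real^'m^'n \<Rightarrow> nat \<Rightarrow> nat \<Rightarrow> real \<Rightarrow> bool" where
  "partial_RIC_ok A k u \<delta> \<longleftrightarrow>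
     (\<forall>(T::'m set) (b::'m \<Rightarrow> real). card T = k \<longrightarrow> (\<forall>j\<in>T. b j = 0) \<longrightarrow>
        card {j. b j \<noteq> 0} \<le> u \<longrightarrow>
        (1 - \<delta>) * (\<Sum>j\<in>-T. (b j)\<^sup>2) \<le> (norm (proj_perp A T (colcomb A (-T) b)))\<^sup>2 \<and>
        (norm (proj_perp A T (colcomb A (-T) b)))\<^sup>2 \<le> (1 + \<delta>) * (\<Sum>j\<in>-T. (b j)\<^sup>2))"

definition partial_RIC :: "real^'m^'n \<Rightarrow> nat \<Rightarrow> nat \<Rightarrow> real" where
  "partial_RIC A k u = Inf {\<delta>. partial_RIC_ok A k u \<delta>}"

end

theory Submission
  imports Defs
begin

text \<open>For \<open>h = b - x\<close> in the null space of \<open>A\<close>, the part of \<open>h\<close> outside \<open>T\<close> is annihilated by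
  \<open>B = P_{T,perp} A_{T^c}\<close>, and the partial RIC says that \<open>B\<close> is a near-isometry on vectors with at
  most \<open>2u\<close> nonzero entries, all outside \<open>T\<close>. Candes' argument for the restricted isometry
  property, run for \<open>B\<close> in place of \<open>A\<close> (cut \<open>T^c - \<Delta>\<close> into blocks of \<open>u\<close> entries of decreasing
  magnitude), yields the null space property \<open>(1 - \<delta>) |h_\<Delta>|_1 \<le> sqrt 2 \<delta> |h_(T^c - \<Delta>)|_1\<close>.
  For \<open>\<delta> < sqrt 2 - 1\<close> this gives \<open>|h_\<Delta>|_1 < |h_(T^c - \<Delta>)|_1\<close>, and since \<open>x\<close> vanishes on
  \<open>T^c - \<Delta>\<close>, the triangle inequality turns this into \<open>|x_(T^c)|_1 < |b_(T^c)|_1\<close>.\<close>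

lemma colcomb_add: "colcomb A S (\<lambda>j. b1 j + b2 j) = colcomb A S b1 + colcomb A S b2"
  unfolding colcomb_def by (simp add: scaleR_add_left sum.distrib)

lemma colcomb_diff: "colcomb A S (\<lambda>j. b1 j - b2 j) = colcomb A S b1 - colcomb A S b2"
  unfolding colcomb_def by (simp add: scaleR_diff_left sum_subtractf)

lemma colcomb_scale: "colcomb A S (\<lambda>j. r * b j) = r *\<^sub>R colcomb A S b"
  unfolding colcomb_def by (simp add: scaleR_sum_right)

lemma colcomb_zero [simp]: "colcomb A S (\<lambda>j. 0) = 0"
  unfolding colcomb_def by simp

lemma colcomb_cong: "(\<And>j. j \<in> S \<Longrightarrow> b1 j = b2 j) \<Longrightarrow> colcomb A S b1 = colcomb A S b2"
  unfolding colcomb_def by (rule sum.cong) auto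

lemma inner_colcomb_left: "inner (colcomb A S c) w = (\<Sum>j\<in>S. c j * inner (column j A) w)"
  unfolding colcomb_def by (simp add: inner_sum_left)

lemma inner_colcomb_right: "inner w (colcomb A S c) = (\<Sum>j\<in>S. c j * inner w (column j A))"
  unfolding colcomb_def by (simp add: inner_sum_right)

lemma matrix_vector_mult_eq_colcomb: "A *v v = colcomb A UNIV (\<lambda>j. v $ j)"
  unfolding colcomb_def matrix_mult_sum by (simp add: scalar_mult_eq_scaleR)

lemma colcomb_UNIV_split: "colcomb A UNIV b = colcomb A T b + colcomb A (-T) b"
  unfolding colcomb_def by (subst sum.union_disjoint[symmetric]) auto

lemma span_columns_subset_range_colcomb:
  "span ((\<lambda>i. column i A) ` T) \<subseteq> range (colcomb A T)"
proof (rule span_minimal)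
  show "(\<lambda>i. column i A) ` T \<subseteq> range (colcomb A T)"
  proof
    fix w assume "w \<in> (\<lambda>i. column i A) ` T"
    then obtain i where i: "i \<in> T" "w = column i A" by blast
    have "colcomb A T (\<lambda>j. if j = i then 1 else 0) = (\<Sum>j\<in>T. if j = i then column j A else 0)"
      unfolding colcomb_def by (rule sum.cong) auto
    also have "\<dots> = w" using i by (simp add: sum.delta)
    finally show "w \<in> range (colcomb A T)" by (metis range_eqI)
  qed
  show "subspace (range (colcomb A T))"
    unfolding subspace_def
  proof (intro conjI ballI allI)
    show "0 \<in> range (colcomb A T)" by (rule range_eqI[where x = "\<lambda>j. 0"]) simp
    show "p + q \<in> range (colcomb A T)" if "p \<in> range (colcomb A T)" "q \<in> range (colcomb A T)" for p q
      using that by (auto intro: range_eqI simp flip: colcomb_add)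
    show "r *\<^sub>R p \<in> range (colcomb A T)" if "p \<in> range (colcomb A T)" for r p
      using that by (auto intro: range_eqI simp flip: colcomb_scale)
  qed
qed

definition normal_eq :: "real^'m^'n \<Rightarrow> 'm set \<Rightarrow> real^'n \<Rightarrow> ('m \<Rightarrow> real) \<Rightarrow> bool" where
  "normal_eq A T v c \<longleftrightarrow> (\<forall>j. j \<notin> T \<longrightarrow> c j = 0) \<and>
      (\<forall>i\<in>T. inner (column i A) (colcomb A T c) = inner (column i A) v)"

lemma proj_perp_eq: "proj_perp A T v = v - colcomb A T (THE c. normal_eq A T v c)"
  unfolding proj_perp_def normal_eq_def by simp

lemma normal_eq_unique:
  assumes fr: "full_col_rank A T" and c1: "normal_eq A T v c1" and c2: "normal_eq A T v c2"
  shows "c1 = c2"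
proof -
  define d where "d = (\<lambda>j. c1 j - c2 j)"
  define w where "w = colcomb A T d"
  have "inner w w = (\<Sum>j\<in>T. d j * inner (column j A) w)"
    unfolding w_def by (rule inner_colcomb_left)
  also have "\<dots> = 0"
    using c1 c2 unfolding normal_eq_def w_def d_def colcomb_diff by (simp add: inner_diff_right)
  finally have "\<forall>j\<in>T. d j = 0" using fr unfolding full_col_rank_def w_def by simp
  moreover have "\<forall>j. j \<notin> T \<longrightarrow> d j = 0" using c1 c2 unfolding normal_eq_def d_def by simp
  ultimately show ?thesis unfolding d_def by (metis eq_iff_diff_eq_0 ext)
qed

lemma normal_eq_exists: "\<exists>c. normal_eq A T v c"
proof -
  obtain y z where y: "y \<in> span ((\<lambda>i. column i A) ` T)"
    and z: "\<And>w. w \<in> span ((\<lambda>i. column i A) ` T) \<Longrightarrow> orthogonal z w" and v: "v = y + z"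
    by (rule orthogonal_subspace_decomp_exists[of "(\<lambda>i. column i A) ` T" v]) auto
  obtain c0 where c0: "y = colcomb A T c0"
    using y span_columns_subset_range_colcomb by blast
  define c where "c = (\<lambda>j. if j \<in> T then c0 j else 0)"
  have cc: "colcomb A T c = y" unfolding c0 by (rule colcomb_cong) (simp add: c_def)
  have "inner (column i A) z = 0" if "i \<in> T" for i
    using z[of "column i A"] that by (simp add: span_base orthogonal_def inner_commute)
  then have "normal_eq A T v c"
    unfolding normal_eq_def cc v by (simp add: c_def inner_add_right)
  then show ?thesis by blast
qed

lemma ex1_normal_eq: "full_col_rank A T \<Longrightarrow> \<exists>!c. normal_eq A T v c"
  using normal_eq_exists normal_eq_unique by blast

lemma the_normal_eq: "full_col_rank A T \<Longrightarrow> normal_eq A T v (THE c. normal_eq A T v c)"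
  by (rule theI'[OF ex1_normal_eq])

lemma the_normal_eq_eq:
  "full_col_rank A T \<Longrightarrow> normal_eq A T v c \<Longrightarrow> (THE c. normal_eq A T v c) = c"
  by (rule the1_equality[OF ex1_normal_eq])

lemma proj_perp_add:
  assumes fr: "full_col_rank A T"
  shows "proj_perp A T (v1 + v2) = proj_perp A T v1 + proj_perp A T v2"
proof -
  let ?c1 = "THE c. normal_eq A T v1 c" and ?c2 = "THE c. normal_eq A T v2 c"
  have "normal_eq A T (v1 + v2) (\<lambda>j. ?c1 j + ?c2 j)"
    using the_normal_eq[OF fr, of v1] the_normal_eq[OF fr, of v2]
    unfolding normal_eq_def by (simp add: colcomb_add inner_add_right)
  then have "(THE c. normal_eq A T (v1 + v2) c) = (\<lambda>j. ?c1 j + ?c2 j)"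
    by (rule the_normal_eq_eq[OF fr])
  then show ?thesis unfolding proj_perp_eq by (simp add: colcomb_add algebra_simps)
qed

lemma proj_perp_scale:
  assumes fr: "full_col_rank A T"
  shows "proj_perp A T (r *\<^sub>R v) = r *\<^sub>R proj_perp A T v"
proof -
  let ?c = "THE c. normal_eq A T v c"
  have "normal_eq A T (r *\<^sub>R v) (\<lambda>j. r * ?c j)"
    using the_normal_eq[OF fr, of v] unfolding normal_eq_def by (simp add: colcomb_scale)
  then have "(THE c. normal_eq A T (r *\<^sub>R v) c) = (\<lambda>j. r * ?c j)"
    by (rule the_normal_eq_eq[OF fr])
  then show ?thesis unfolding proj_perp_eq by (simp add: colcomb_scale algebra_simps)
qed

lemma proj_perp_colcomb:
  assumes fr: "full_col_rank A T"
  shows "proj_perp A T (colcomb A T b) = 0"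
proof -
  define c' where "c' = (\<lambda>j. if j \<in> T then b j else 0)"
  have cc: "colcomb A T c' = colcomb A T b" by (rule colcomb_cong) (simp add: c'_def)
  have "normal_eq A T (colcomb A T b) c'" unfolding normal_eq_def cc by (simp add: c'_def)
  then have "(THE c. normal_eq A T (colcomb A T b) c) = c'" by (rule the_normal_eq_eq[OF fr])
  then show ?thesis unfolding proj_perp_eq using cc by simp
qed

lemma inner_proj_perp_colcomb:
  assumes fr: "full_col_rank A T"
  shows "inner (proj_perp A T v) (colcomb A T c) = 0"
proof -
  let ?c = "THE c. normal_eq A T v c"
  have "inner (column j A) (colcomb A T ?c) = inner (column j A) v" if "j \<in> T" for j
    using the_normal_eq[OF fr, of v] that unfolding normal_eq_def by blast
  then have "inner (column j A) (proj_perp A T v) = 0" if "j \<in> T" for j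
    using that unfolding proj_perp_eq by (simp add: inner_diff_right)
  then show ?thesis unfolding inner_colcomb_right by (simp add: inner_commute)
qed

lemma norm_proj_perp_le:
  assumes fr: "full_col_rank A T"
  shows "norm (proj_perp A T v) \<le> norm v"
proof -
  define q where "q = colcomb A T (THE c. normal_eq A T v c)"
  have v: "v = proj_perp A T v + q" unfolding q_def proj_perp_eq by simp
  have "(norm v)\<^sup>2 = (norm (proj_perp A T v))\<^sup>2 + (norm q)\<^sup>2"
    by (subst v, rule norm_add_Pythagorean)
       (simp add: orthogonal_def q_def inner_proj_perp_colcomb[OF fr])
  then have "(norm (proj_perp A T v))\<^sup>2 \<le> (norm v)\<^sup>2" by simp
  then show ?thesis by (rule power2_le_imp_le) simp
qed

definition perp_colcomb :: "real^'m^'n \<Rightarrow> 'm set \<Rightarrow> ('m \<Rightarrow> real) \<Rightarrow> real^'n" where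
  "perp_colcomb A T b = proj_perp A T (colcomb A (-T) b)"

lemma perp_colcomb_add:
  "full_col_rank A T \<Longrightarrow> perp_colcomb A T (\<lambda>j. b1 j + b2 j) = perp_colcomb A T b1 + perp_colcomb A T b2"
  unfolding perp_colcomb_def colcomb_add by (rule proj_perp_add)

lemma perp_colcomb_scale:
  "full_col_rank A T \<Longrightarrow> perp_colcomb A T (\<lambda>j. r * b j) = r *\<^sub>R perp_colcomb A T b"
  unfolding perp_colcomb_def colcomb_scale by (rule proj_perp_scale)

lemma perp_colcomb_zero: "full_col_rank A T \<Longrightarrow> perp_colcomb A T (\<lambda>j. 0) = 0"
  using perp_colcomb_scale[of A T 0 "\<lambda>j. 0"] by simp

lemma perp_colcomb_cong:
  "(\<And>j. j \<notin> T \<Longrightarrow> b1 j = b2 j) \<Longrightarrow> perp_colcomb A T b1 = perp_colcomb A T b2"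
  unfolding perp_colcomb_def by (metis ComplD colcomb_cong)

lemma perp_colcomb_sum_list:
  assumes "full_col_rank A T"
  shows "perp_colcomb A T (\<lambda>j. \<Sum>Q\<leftarrow>Qs. f Q j) = (\<Sum>Q\<leftarrow>Qs. perp_colcomb A T (f Q))"
  by (induction Qs) (simp_all add: assms perp_colcomb_zero perp_colcomb_add)

lemma perp_colcomb_null_vector:
  assumes fr: "full_col_rank A T" and h: "A *v h = 0"
  shows "perp_colcomb A T (\<lambda>j. h $ j) = 0"
proof -
  have "colcomb A (-T) (\<lambda>j. h $ j) = (-1) *\<^sub>R colcomb A T (\<lambda>j. h $ j)"
    using h unfolding matrix_vector_mult_eq_colcomb colcomb_UNIV_split[of A _ T]
    by (simp add: eq_neg_iff_add_eq_0 add.commute)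
  also have "\<dots> = colcomb A T (\<lambda>j. - h $ j)" using colcomb_scale[of A T "-1"] by simp
  finally show ?thesis unfolding perp_colcomb_def using proj_perp_colcomb[OF fr] by simp
qed

lemma power2_L2_set: "(L2_set f A)\<^sup>2 = (\<Sum>i\<in>A. (f i)\<^sup>2)"
  unfolding L2_set_def by (simp add: sum_nonneg)

lemma partial_RIC_okD:
  assumes "partial_RIC_ok A k s \<delta>" "card T = k" "\<forall>j\<in>T. b j = 0" "card {j. b j \<noteq> 0} \<le> s"
  shows "(1 - \<delta>) * (L2_set b (-T))\<^sup>2 \<le> (norm (perp_colcomb A T b))\<^sup>2"
    and "(norm (perp_colcomb A T b))\<^sup>2 \<le> (1 + \<delta>) * (L2_set b (-T))\<^sup>2"
  using assms unfolding partial_RIC_ok_def perp_colcomb_def power2_L2_set by blast+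

lemma inner_polarization:
  fixes a b :: "'a::real_inner"
  shows "4 * inner a b = (norm (a + b))\<^sup>2 - (norm (a - b))\<^sup>2"
proof -
  have "inner a b = ((norm (a + b))\<^sup>2 - (norm a)\<^sup>2 - (norm b)\<^sup>2) / 2" by (rule dot_norm)
  moreover have "inner a b = ((norm a)\<^sup>2 + (norm b)\<^sup>2 - (norm (a - b))\<^sup>2) / 2" by (rule dot_norm_neg)
  ultimately show ?thesis by (simp add: field_simps)
qed

lemma inner_perp_colcomb_unit_le:
  assumes fr: "full_col_rank A T" and ok: "partial_RIC_ok A k (2 * s) \<delta>" and cT: "card T = k"
    and z1: "\<forall>j\<in>T. e1 j = 0" and z2: "\<forall>j\<in>T. e2 j = 0"
    and c1: "card {j. e1 j \<noteq> 0} \<le> s" and c2: "card {j. e2 j \<noteq> 0} \<le> s"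
    and disj: "\<forall>j. e1 j = 0 \<or> e2 j = 0"
    and n1: "L2_set e1 (-T) = 1" and n2: "L2_set e2 (-T) = 1"
  shows "\<bar>inner (perp_colcomb A T e1) (perp_colcomb A T e2)\<bar> \<le> \<delta>"
proof -
  let ?a = "perp_colcomb A T e1" and ?b = "perp_colcomb A T e2"
  have bounds: "(1 - \<delta>) * 2 \<le> (norm (?a + r *\<^sub>R ?b))\<^sup>2 \<and> (norm (?a + r *\<^sub>R ?b))\<^sup>2 \<le> (1 + \<delta>) * 2"
    if r: "r\<^sup>2 = 1" for r
  proof -
    let ?f = "\<lambda>j. e1 j + r * e2 j"
    have "{j. ?f j \<noteq> 0} \<subseteq> {j. e1 j \<noteq> 0} \<union> {j. e2 j \<noteq> 0}" by auto
    then have "card {j. ?f j \<noteq> 0} \<le> card {j. e1 j \<noteq> 0} + card {j. e2 j \<noteq> 0}"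
      by (meson card_Un_le card_mono finite order_trans)
    then have card: "card {j. ?f j \<noteq> 0} \<le> 2 * s" using c1 c2 by linarith
    have "(L2_set ?f (-T))\<^sup>2 = (\<Sum>j\<in>-T. (e1 j)\<^sup>2 + r\<^sup>2 * (e2 j)\<^sup>2)"
      unfolding power2_L2_set using disj
      by (intro sum.cong) (auto simp: power2_eq_square algebra_simps)
    also have "\<dots> = 2" using n1 n2 r by (simp add: sum.distrib power2_L2_set[symmetric])
    finally have norm: "(L2_set ?f (-T))\<^sup>2 = 2" .
    have "perp_colcomb A T ?f = ?a + r *\<^sub>R ?b"
      using perp_colcomb_add[OF fr, of e1] perp_colcomb_scale[OF fr] by simp
    then show ?thesis
      using partial_RIC_okD[OF ok cT _ card] z1 z2 norm by simp
  qed
  then show ?thesis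
    using bounds[of 1] bounds[of "-1"] inner_polarization[of ?a ?b] by (simp add: abs_le_iff)
qed

lemma inner_perp_colcomb_le:
  assumes fr: "full_col_rank A T" and ok: "partial_RIC_ok A k (2 * s) \<delta>" and cT: "card T = k"
    and z1: "\<forall>j\<in>T. b1 j = 0" and z2: "\<forall>j\<in>T. b2 j = 0"
    and c1: "card {j. b1 j \<noteq> 0} \<le> s" and c2: "card {j. b2 j \<noteq> 0} \<le> s"
    and disj: "\<forall>j. b1 j = 0 \<or> b2 j = 0"
  shows "\<bar>inner (perp_colcomb A T b1) (perp_colcomb A T b2)\<bar> \<le> \<delta> * L2_set b1 (-T) * L2_set b2 (-T)"
proof (cases "L2_set b1 (-T) = 0 \<or> L2_set b2 (-T) = 0")
  case True
  then have "b1 = (\<lambda>j. 0) \<or> b2 = (\<lambda>j. 0)"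
    using z1 z2 by (auto simp: L2_set_eq_0_iff fun_eq_iff)
  then show ?thesis using True perp_colcomb_zero[OF fr] by auto
next
  case False
  define n1 n2 where "n1 = L2_set b1 (-T)" and "n2 = L2_set b2 (-T)"
  have pos: "n1 > 0" "n2 > 0" using False unfolding n1_def n2_def
    by (metis L2_set_nonneg order_le_less)+
  define e1 e2 where "e1 = (\<lambda>j. b1 j / n1)" and "e2 = (\<lambda>j. b2 j / n2)"
  have b1: "b1 = (\<lambda>j. n1 * e1 j)" and b2: "b2 = (\<lambda>j. n2 * e2 j)"
    using pos unfolding e1_def e2_def by auto
  have "L2_set e1 (-T) = 1" "L2_set e2 (-T) = 1"
    using pos L2_set_right_distrib[of "inverse n1" b1 "-T"] L2_set_right_distrib[of "inverse n2" b2 "-T"]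
    unfolding n1_def n2_def e1_def e2_def by (simp_all add: divide_inverse mult.commute)
  moreover have "card {j. e1 j \<noteq> 0} \<le> s" "card {j. e2 j \<noteq> 0} \<le> s"
    using c1 c2 pos unfolding e1_def e2_def by simp_all
  ultimately have "\<bar>inner (perp_colcomb A T e1) (perp_colcomb A T e2)\<bar> \<le> \<delta>"
    using z1 z2 disj
    by (intro inner_perp_colcomb_unit_le[OF fr ok cT]) (auto simp: e1_def e2_def)
  moreover have "perp_colcomb A T b1 = n1 *\<^sub>R perp_colcomb A T e1"
    "perp_colcomb A T b2 = n2 *\<^sub>R perp_colcomb A T e2"
    by (subst b1 b2, rule perp_colcomb_scale[OF fr])+
  ultimately show ?thesis
    unfolding n1_def[symmetric] n2_def[symmetric] using pos
    by (simp add: abs_mult mult_left_mono mult.assoc mult.left_commute[of \<delta>])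
qed

definition zero_outside :: "('a \<Rightarrow> real) \<Rightarrow> 'a set \<Rightarrow> 'a \<Rightarrow> real" where
  "zero_outside h Q j = (if j \<in> Q then h j else 0)"

lemma L2_set_zero_outside:
  assumes "Q \<subseteq> B" "finite B"
  shows "L2_set (zero_outside h Q) B = L2_set h Q"
proof -
  have "(\<Sum>i\<in>B. (zero_outside h Q i)\<^sup>2) = (\<Sum>i\<in>Q. (zero_outside h Q i)\<^sup>2)"
    using assms by (intro sum.mono_neutral_right) (auto simp: zero_outside_def)
  then show ?thesis unfolding L2_set_def by (simp add: zero_outside_def)
qed

lemma card_support_zero_outside: "finite Q \<Longrightarrow> card {j. zero_outside h Q j \<noteq> 0} \<le> card Q"
  unfolding zero_outside_def by (intro card_mono) auto

lemma L2_set_le_sqrt_card: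
  assumes "\<forall>a\<in>Q. \<bar>h a\<bar> \<le> m"
  shows "L2_set h Q \<le> sqrt (card Q) * m"
proof -
  have "L2_set h Q = L2_set (\<lambda>a. \<bar>h a\<bar>) Q" unfolding L2_set_def by simp
  also have "\<dots> \<le> L2_set (\<lambda>a. m) Q" using assms by (intro L2_set_mono) auto
  also have "\<dots> = sqrt (card Q) * m"
    using assms by (cases "Q = {}") (auto simp: L2_set_constant)
  finally show ?thesis .
qed

lemma exists_top_subset:
  fixes h :: "'a \<Rightarrow> real"
  assumes fin: "finite R"
  shows "\<exists>Q\<subseteq>R. card Q = min s (card R) \<and> (\<forall>a\<in>Q. \<forall>b\<in>R - Q. \<bar>h b\<bar> \<le> \<bar>h a\<bar>)"
proof (induction s)
  case 0
  show ?case by (intro exI[of _ "{}"]) simp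
next
  case (Suc s)
  then obtain Q where Q: "Q \<subseteq> R" "card Q = min s (card R)" "\<forall>a\<in>Q. \<forall>b\<in>R - Q. \<bar>h b\<bar> \<le> \<bar>h a\<bar>"
    by blast
  show ?case
  proof (cases "card R \<le> s")
    case True
    then show ?thesis using Q by (intro exI[of _ Q]) auto
  next
    case False
    then have "R - Q \<noteq> {}" using Q(1,2) by auto
    then have "Max ((\<lambda>b. \<bar>h b\<bar>) ` (R - Q)) \<in> (\<lambda>b. \<bar>h b\<bar>) ` (R - Q)"
      using fin by (intro Max_in) auto
    then obtain b0 where b0: "b0 \<in> R - Q" "\<bar>h b0\<bar> = Max ((\<lambda>b. \<bar>h b\<bar>) ` (R - Q))"
      by auto
    have max: "\<forall>b\<in>R - Q. \<bar>h b\<bar> \<le> \<bar>h b0\<bar>"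
      unfolding b0(2) using fin by simp
    have "card (insert b0 Q) = Suc s"
      using b0(1) Q(1,2) False fin by (simp add: finite_subset)
    then show ?thesis
      using Q b0(1) max False by (intro exI[of _ "insert b0 Q"]) auto
  qed
qed

lemma exists_top_subset_average:
  fixes h :: "'a \<Rightarrow> real"
  assumes fin: "finite R"
  shows "\<exists>Q\<subseteq>R. card Q = min s (card R) \<and> (\<forall>b\<in>R - Q. real s * \<bar>h b\<bar> \<le> (\<Sum>a\<in>Q. \<bar>h a\<bar>))"
proof -
  obtain Q where Q: "Q \<subseteq> R" "card Q = min s (card R)" "\<forall>a\<in>Q. \<forall>b\<in>R - Q. \<bar>h b\<bar> \<le> \<bar>h a\<bar>"
    using exists_top_subset[OF fin] by blast
  have "real s * \<bar>h b\<bar> \<le> (\<Sum>a\<in>Q. \<bar>h a\<bar>)" if b: "b \<in> R - Q" for b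
  proof -
    have "Q \<noteq> R" using b by blast
    then have "card Q = s" using Q(1,2) fin by (metis card_subset_eq min_def)
    then have "real s * \<bar>h b\<bar> = (\<Sum>a\<in>Q. \<bar>h b\<bar>)" by simp
    also have "\<dots> \<le> (\<Sum>a\<in>Q. \<bar>h a\<bar>)" using Q(3) b by (intro sum_mono) auto
    finally show ?thesis .
  qed
  then show ?thesis using Q(1,2) by blast
qed

text \<open>Each entry outside a block of largest entries is at most the block's average, so the
  \<open>l_2\<close>-norms of the blocks telescope against the \<open>l_1\<close>-norm.\<close>
lemma exists_blocks:
  fixes h :: "'a \<Rightarrow> real"
  assumes "finite R" "s > 0" "m \<ge> 0" "\<forall>a\<in>R. \<bar>h a\<bar> \<le> m"
  shows "\<exists>Qs. (\<forall>Q\<in>set Qs. Q \<subseteq> R \<and> card Q \<le> s) \<and>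
     (\<forall>j. zero_outside h R j = (\<Sum>Q\<leftarrow>Qs. zero_outside h Q j)) \<and>
     (\<Sum>Q\<leftarrow>Qs. L2_set h Q) \<le> sqrt s * m + (\<Sum>a\<in>R. \<bar>h a\<bar>) / sqrt s"
  using assms
proof (induction "card R" arbitrary: R m rule: less_induct)
  case less
  note fin = less.prems(1) and s = less.prems(2) and m = less.prems(3,4)
  show ?case
  proof (cases "R = {}")
    case True
    then show ?thesis using m by (intro exI[of _ "[]"]) (simp add: zero_outside_def)
  next
    case False
    obtain Q where Q: "Q \<subseteq> R" "card Q = min s (card R)"
      and avg: "\<forall>b\<in>R - Q. real s * \<bar>h b\<bar> \<le> (\<Sum>a\<in>Q. \<bar>h a\<bar>)"
      using exists_top_subset_average[OF fin] by blast
    have "card Q > 0" using Q(2) s False fin by (simp add: card_gt_0_iff)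
    moreover have "card (R - Q) = card R - card Q"
      using Q(1) fin by (meson card_Diff_subset finite_subset)
    ultimately have smaller: "card (R - Q) < card R" using Q(2) by linarith
    define m' where "m' = (\<Sum>a\<in>Q. \<bar>h a\<bar>) / s"
    have bound: "\<forall>b\<in>R - Q. \<bar>h b\<bar> \<le> m'" using avg s unfolding m'_def by (simp add: field_simps)
    have m': "m' \<ge> 0" unfolding m'_def by (simp add: sum_nonneg)
    obtain Qs where Qs: "\<forall>Q'\<in>set Qs. Q' \<subseteq> R - Q \<and> card Q' \<le> s"
        "\<forall>j. zero_outside h (R - Q) j = (\<Sum>Q'\<leftarrow>Qs. zero_outside h Q' j)"
        "(\<Sum>Q'\<leftarrow>Qs. L2_set h Q') \<le> sqrt s * m' + (\<Sum>a\<in>R - Q. \<bar>h a\<bar>) / sqrt s"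
      using less.hyps[OF smaller _ s m' bound] fin by blast
    have "L2_set h Q \<le> sqrt (card Q) * m" using m Q(1) by (intro L2_set_le_sqrt_card) auto
    also have "\<dots> \<le> sqrt s * m" using Q(2) m by (intro mult_right_mono) auto
    finally have head: "L2_set h Q \<le> sqrt s * m" .
    have "sqrt s * m' = (\<Sum>a\<in>Q. \<bar>h a\<bar>) / sqrt s"
      unfolding m'_def using s by (simp add: field_simps real_sqrt_mult[symmetric])
    moreover have "(\<Sum>a\<in>R. \<bar>h a\<bar>) = (\<Sum>a\<in>Q. \<bar>h a\<bar>) + (\<Sum>a\<in>R - Q. \<bar>h a\<bar>)"
      using Q(1) fin by (metis add.commute sum.subset_diff)
    ultimately have "(\<Sum>Q'\<leftarrow>Q # Qs. L2_set h Q') \<le> sqrt s * m + (\<Sum>a\<in>R. \<bar>h a\<bar>) / sqrt s"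
      using head Qs(3) by (simp add: add_divide_distrib)
    moreover have "zero_outside h R j = (\<Sum>Q'\<leftarrow>Q # Qs. zero_outside h Q' j)" for j
    proof -
      have "zero_outside h R j = zero_outside h Q j + zero_outside h (R - Q) j"
        using Q(1) by (auto simp: zero_outside_def)
      then show ?thesis using Qs(2) by simp
    qed
    ultimately show ?thesis using Qs(1) Q(1,2) by (intro exI[of _ "Q # Qs"]) auto
  qed
qed

lemma exists_head_tail_blocks:
  fixes h :: "'a \<Rightarrow> real"
  assumes fin: "finite R" and s: "s > 0"
  shows "\<exists>Q0 Qs. Q0 \<subseteq> R \<and> card Q0 \<le> s \<and> (\<forall>Q\<in>set Qs. Q \<subseteq> R - Q0 \<and> card Q \<le> s) \<and>
     (\<forall>j. zero_outside h (R - Q0) j = (\<Sum>Q\<leftarrow>Qs. zero_outside h Q j)) \<and>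
     sqrt s * (\<Sum>Q\<leftarrow>Qs. L2_set h Q) \<le> (\<Sum>a\<in>R. \<bar>h a\<bar>)"
proof -
  obtain Q0 where Q0: "Q0 \<subseteq> R" "card Q0 = min s (card R)"
    and avg: "\<forall>b\<in>R - Q0. real s * \<bar>h b\<bar> \<le> (\<Sum>a\<in>Q0. \<bar>h a\<bar>)"
    using exists_top_subset_average[OF fin] by blast
  define m where "m = (\<Sum>a\<in>Q0. \<bar>h a\<bar>) / s"
  have "\<forall>b\<in>R - Q0. \<bar>h b\<bar> \<le> m" using avg s unfolding m_def by (simp add: field_simps)
  moreover have "m \<ge> 0" unfolding m_def by (simp add: sum_nonneg)
  ultimately obtain Qs where Qs: "\<forall>Q\<in>set Qs. Q \<subseteq> R - Q0 \<and> card Q \<le> s"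
      "\<forall>j. zero_outside h (R - Q0) j = (\<Sum>Q\<leftarrow>Qs. zero_outside h Q j)"
      "(\<Sum>Q\<leftarrow>Qs. L2_set h Q) \<le> sqrt s * m + (\<Sum>a\<in>R - Q0. \<bar>h a\<bar>) / sqrt s"
    using exists_blocks[of "R - Q0" s m h] fin s by auto
  have "sqrt s * (\<Sum>Q\<leftarrow>Qs. L2_set h Q) \<le> sqrt s * (sqrt s * m + (\<Sum>a\<in>R - Q0. \<bar>h a\<bar>) / sqrt s)"
    using Qs(3) by (intro mult_left_mono) auto
  also have "\<dots> = real s * m + (\<Sum>a\<in>R - Q0. \<bar>h a\<bar>)"
    using s by (simp add: distrib_left mult.assoc[symmetric])
  also have "\<dots> = (\<Sum>a\<in>Q0. \<bar>h a\<bar>) + (\<Sum>a\<in>R - Q0. \<bar>h a\<bar>)"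
    unfolding m_def using s by simp
  also have "\<dots> = (\<Sum>a\<in>R. \<bar>h a\<bar>)"
    using Q0(1) fin by (simp add: sum.subset_diff[of Q0 R] add.commute)
  finally show ?thesis using Q0(1,2) Qs(1,2) by (intro exI[of _ Q0] exI[of _ Qs]) auto
qed

lemma abs_inner_sum_list_le:
  fixes v :: "'a::real_inner"
  assumes "\<And>Q. Q \<in> set Qs \<Longrightarrow> \<bar>inner v (c Q)\<bar> \<le> g Q"
  shows "\<bar>inner v (\<Sum>Q\<leftarrow>Qs. c Q)\<bar> \<le> (\<Sum>Q\<leftarrow>Qs. g Q)"
  using assms
proof (induction Qs)
  case (Cons Q Qs)
  have "\<bar>inner v (\<Sum>Q'\<leftarrow>Q # Qs. c Q')\<bar> \<le> \<bar>inner v (c Q)\<bar> + \<bar>inner v (\<Sum>Q'\<leftarrow>Qs. c Q')\<bar>"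
    by (simp add: inner_add_right abs_triangle_ineq)
  then show ?case using Cons by fastforce
qed simp

lemma sum_abs_le_sqrt_card_L2_set:
  "(\<Sum>j\<in>S. \<bar>h j\<bar>) \<le> sqrt (card S) * L2_set h S"
proof -
  have "(\<Sum>j\<in>S. \<bar>h j\<bar> * \<bar>1\<bar>) \<le> L2_set h S * L2_set (\<lambda>_. 1) S"
    by (rule L2_set_mult_ineq)
  then show ?thesis by (simp add: L2_set_constant mult.commute)
qed

lemma sum_le_sqrt2_sqrt_sum_squares:
  fixes a b :: real
  shows "a + b \<le> sqrt 2 * sqrt (a\<^sup>2 + b\<^sup>2)"
proof -
  have "(a + b)\<^sup>2 \<le> 2 * (a\<^sup>2 + b\<^sup>2)"
    using zero_le_power2[of "a - b"] by (simp add: power2_eq_square algebra_simps)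
  also have "\<dots> = (sqrt 2 * sqrt (a\<^sup>2 + b\<^sup>2))\<^sup>2" by (simp add: power_mult_distrib)
  finally show ?thesis by (rule power2_le_imp_le) simp
qed

lemma cone_bound:
  fixes \<delta> n0 n1 W :: real
  assumes "0 \<le> \<delta>" "\<delta> \<le> 1" "0 \<le> n0" "0 \<le> W"
    and cone: "(1 - \<delta>) * (n0\<^sup>2 + n1\<^sup>2) \<le> \<delta> * (n0 + n1) * W"
  shows "(1 - \<delta>) * n0 \<le> sqrt 2 * \<delta> * W"
proof -
  define N where "N = sqrt (n0\<^sup>2 + n1\<^sup>2)"
  have "n0 \<le> N" unfolding N_def using assms(3) real_sqrt_le_mono[of "n0\<^sup>2" "n0\<^sup>2 + n1\<^sup>2"] by simp
  have "(1 - \<delta>) * N * N \<le> \<delta> * (n0 + n1) * W"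
    using cone by (simp add: N_def mult.assoc flip: power2_eq_square)
  also have "\<dots> \<le> \<delta> * (sqrt 2 * N) * W"
    unfolding N_def using assms sum_le_sqrt2_sqrt_sum_squares[of n0 n1]
    by (intro mult_right_mono mult_left_mono) auto
  finally have "N * ((1 - \<delta>) * N) \<le> N * (sqrt 2 * \<delta> * W)" by (simp add: algebra_simps)
  then have "(1 - \<delta>) * N \<le> sqrt 2 * \<delta> * W"
    using assms \<open>n0 \<le> N\<close> by (cases "N = 0") (simp_all add: mult_le_cancel_left)
  moreover have "(1 - \<delta>) * n0 \<le> (1 - \<delta>) * N" using \<open>n0 \<le> N\<close> assms by (intro mult_left_mono) auto
  ultimately show ?thesis by linarith
qed

lemma inner_perp_colcomb_zero_outside_le:
  assumes fr: "full_col_rank A T" and ok: "partial_RIC_ok A k (2 * s) \<delta>" and cT: "card T = k"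
    and "P \<subseteq> -T" "Q \<subseteq> -T" "P \<inter> Q = {}" "card P \<le> s" "card Q \<le> s"
  shows "\<bar>inner (perp_colcomb A T (zero_outside h P)) (perp_colcomb A T (zero_outside h Q))\<bar>
    \<le> \<delta> * L2_set h P * L2_set h Q"
proof -
  have "card {j. zero_outside h P j \<noteq> 0} \<le> s" "card {j. zero_outside h Q j \<noteq> 0} \<le> s"
    using card_support_zero_outside[of P h] card_support_zero_outside[of Q h] assms(7,8)
    by (simp_all add: finite_subset)
  moreover have "\<forall>j\<in>T. zero_outside h P j = 0" "\<forall>j\<in>T. zero_outside h Q j = 0"
    "\<forall>j. zero_outside h P j = 0 \<or> zero_outside h Q j = 0"
    using assms(4-6) by (auto simp: zero_outside_def)
  ultimately show ?thesis
    using inner_perp_colcomb_le[OF fr ok cT, of "zero_outside h P" "zero_outside h Q"] assms(4,5)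
    by (simp add: L2_set_zero_outside)
qed

lemma norm_perp_colcomb_zero_outside_ge:
  fixes A :: "real^'m^'n"
  assumes ok: "partial_RIC_ok A k s \<delta>" and cT: "card T = k" and P: "P \<subseteq> -T" "card P \<le> s"
  shows "(1 - \<delta>) * (L2_set h P)\<^sup>2 \<le> (norm (perp_colcomb A T (zero_outside h P)))\<^sup>2"
proof -
  have "card {j. zero_outside h P j \<noteq> 0} \<le> s"
    using card_support_zero_outside[of P h] P(2) by (simp add: finite_subset)
  moreover have "\<forall>j\<in>T. zero_outside h P j = 0" using P(1) by (auto simp: zero_outside_def)
  ultimately have "(1 - \<delta>) * (L2_set (zero_outside h P) (-T))\<^sup>2 \<le> (norm (perp_colcomb A T (zero_outside h P)))\<^sup>2"
    using partial_RIC_okD(1)[OF ok cT] by blast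
  then show ?thesis using P(1) by (simp add: L2_set_zero_outside)
qed

text \<open>Since \<open>B h = 0\<close>, the head \<open>B h_(S \<union> T1)\<close> equals minus the sum of the block images: the
  partial RIC bounds its squared norm from below, and near-orthogonality of \<open>B\<close> on disjoint
  supports bounds it from above.\<close>
lemma perp_colcomb_cone_inequality:
  fixes A :: "real^'m^'n" and h :: "'m \<Rightarrow> real"
  assumes fr: "full_col_rank A T" and ok: "partial_RIC_ok A k (2 * s) \<delta>" and cT: "card T = k"
    and S: "S \<subseteq> -T" "card S \<le> s" and T1: "T1 \<subseteq> -T" "card T1 \<le> s" "S \<inter> T1 = {}"
    and Qs: "\<forall>Q\<in>set Qs. Q \<subseteq> -T - S - T1 \<and> card Q \<le> s"
    and decomp: "\<forall>j. zero_outside h (-T - S - T1) j = (\<Sum>Q\<leftarrow>Qs. zero_outside h Q j)"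
    and null: "perp_colcomb A T h = 0"
  shows "(1 - \<delta>) * ((L2_set h S)\<^sup>2 + (L2_set h T1)\<^sup>2)
    \<le> \<delta> * (L2_set h S + L2_set h T1) * (\<Sum>Q\<leftarrow>Qs. L2_set h Q)"
proof -
  let ?B = "\<lambda>Q. perp_colcomb A T (zero_outside h Q)"
  have "?B (S \<union> T1) = perp_colcomb A T (\<lambda>j. zero_outside h S j + zero_outside h T1 j)"
    using T1(3) by (intro perp_colcomb_cong) (auto simp: zero_outside_def)
  then have head: "?B (S \<union> T1) = ?B S + ?B T1" by (simp add: perp_colcomb_add[OF fr])
  have "h j = zero_outside h S j + zero_outside h T1 j + (\<Sum>Q\<leftarrow>Qs. zero_outside h Q j)"
    if "j \<notin> T" for j
    using that T1(3) decomp[rule_format, of j] by (auto simp: zero_outside_def)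
  then have "0 = ?B S + ?B T1 + (\<Sum>Q\<leftarrow>Qs. ?B Q)"
    using null by (simp add: perp_colcomb_cong[of T h] perp_colcomb_add[OF fr]
        perp_colcomb_sum_list[OF fr])
  then have tail: "?B (S \<union> T1) = - (\<Sum>Q\<leftarrow>Qs. ?B Q)"
    unfolding head by (simp add: eq_neg_iff_add_eq_0)
  have "card (S \<union> T1) \<le> 2 * s" using card_Un_le[of S T1] S(2) T1(2) by linarith
  then have "(1 - \<delta>) * (L2_set h (S \<union> T1))\<^sup>2 \<le> (norm (?B (S \<union> T1)))\<^sup>2"
    using S(1) T1(1) by (intro norm_perp_colcomb_zero_outside_ge[OF ok cT]) auto
  also have "\<dots> = inner (?B (S \<union> T1)) (- (\<Sum>Q\<leftarrow>Qs. ?B Q))"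
    unfolding tail[symmetric] by (simp add: power2_norm_eq_inner)
  also have "\<dots> = - inner (?B (S \<union> T1)) (\<Sum>Q\<leftarrow>Qs. ?B Q)" by simp
  also have "\<dots> \<le> (\<Sum>Q\<leftarrow>Qs. \<delta> * (L2_set h S + L2_set h T1) * L2_set h Q)"
  proof -
    have "\<bar>inner (?B (S \<union> T1)) (?B Q)\<bar> \<le> \<delta> * (L2_set h S + L2_set h T1) * L2_set h Q"
      if "Q \<in> set Qs" for Q
    proof -
      have Q: "Q \<subseteq> -T" "S \<inter> Q = {}" "T1 \<inter> Q = {}" "card Q \<le> s" using Qs that by auto
      have "\<bar>inner (?B (S \<union> T1)) (?B Q)\<bar> \<le> \<bar>inner (?B S) (?B Q)\<bar> + \<bar>inner (?B T1) (?B Q)\<bar>"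
        unfolding head inner_add_left by (rule abs_triangle_ineq)
      then show ?thesis
        using inner_perp_colcomb_zero_outside_le[OF fr ok cT S(1) Q(1,2) S(2) Q(4), of h]
          inner_perp_colcomb_zero_outside_le[OF fr ok cT T1(1) Q(1,3) T1(2) Q(4), of h]
        by (simp add: algebra_simps)
    qed
    then have "\<bar>inner (?B (S \<union> T1)) (\<Sum>Q\<leftarrow>Qs. ?B Q)\<bar>
        \<le> (\<Sum>Q\<leftarrow>Qs. \<delta> * (L2_set h S + L2_set h T1) * L2_set h Q)"
      by (rule abs_inner_sum_list_le)
    then show ?thesis by linarith
  qed
  also have "\<dots> = \<delta> * (L2_set h S + L2_set h T1) * (\<Sum>Q\<leftarrow>Qs. L2_set h Q)"
    by (rule sum_list_const_mult)
  finally show ?thesis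
    using S(1) T1(3) by (simp add: power2_L2_set sum.union_disjoint finite_subset)
qed

lemma null_space_property:
  fixes A :: "real^'m^'n" and h :: "'m \<Rightarrow> real"
  assumes fr: "full_col_rank A T" and ok: "partial_RIC_ok A k (2 * s) \<delta>" and cT: "card T = k"
    and \<delta>: "0 \<le> \<delta>" "\<delta> \<le> 1" and s: "s > 0"
    and S: "S \<subseteq> -T" "card S \<le> s" and null: "perp_colcomb A T h = 0"
  shows "(1 - \<delta>) * (\<Sum>j\<in>S. \<bar>h j\<bar>) \<le> sqrt 2 * \<delta> * (\<Sum>j\<in>-T - S. \<bar>h j\<bar>)"
proof -
  obtain T1 Qs where T1: "T1 \<subseteq> -T - S" "card T1 \<le> s"
    and Qs: "\<forall>Q\<in>set Qs. Q \<subseteq> -T - S - T1 \<and> card Q \<le> s"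
    and decomp: "\<forall>j. zero_outside h (-T - S - T1) j = (\<Sum>Q\<leftarrow>Qs. zero_outside h Q j)"
    and tail: "sqrt s * (\<Sum>Q\<leftarrow>Qs. L2_set h Q) \<le> (\<Sum>j\<in>-T - S. \<bar>h j\<bar>)"
    using exists_head_tail_blocks[of "-T - S" s h] s by auto
  define W where "W = (\<Sum>Q\<leftarrow>Qs. L2_set h Q)"
  have "W \<ge> 0" unfolding W_def by (induction Qs) auto
  have "(1 - \<delta>) * ((L2_set h S)\<^sup>2 + (L2_set h T1)\<^sup>2) \<le> \<delta> * (L2_set h S + L2_set h T1) * W"
    unfolding W_def using T1 by (intro perp_colcomb_cone_inequality[OF fr ok cT S _ _ _ Qs decomp null]) auto
  then have cone: "(1 - \<delta>) * L2_set h S \<le> sqrt 2 * \<delta> * W"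
    by (rule cone_bound[OF \<delta> L2_set_nonneg \<open>W \<ge> 0\<close>])
  have "(\<Sum>j\<in>S. \<bar>h j\<bar>) \<le> sqrt (card S) * L2_set h S" by (rule sum_abs_le_sqrt_card_L2_set)
  also have "\<dots> \<le> sqrt s * L2_set h S" using S(2) by (intro mult_right_mono) auto
  finally have "(1 - \<delta>) * (\<Sum>j\<in>S. \<bar>h j\<bar>) \<le> sqrt s * ((1 - \<delta>) * L2_set h S)"
    using \<delta> by (simp add: mult_left_mono mult.left_commute)
  also have "\<dots> \<le> sqrt s * (sqrt 2 * \<delta> * W)" using cone by (intro mult_left_mono) auto
  also have "\<dots> = sqrt 2 * \<delta> * (sqrt s * W)" by (simp add: algebra_simps)
  also have "\<dots> \<le> sqrt 2 * \<delta> * (\<Sum>j\<in>-T - S. \<bar>h j\<bar>)"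
    using tail \<delta> unfolding W_def by (intro mult_left_mono) auto
  finally show ?thesis .
qed

lemma partial_RIC_ok_nonneg:
  fixes A :: "real^'m^'n" and T :: "'m set"
  assumes ok: "partial_RIC_ok A k s \<delta>" and cT: "card T = k" and j0: "j0 \<notin> T" and s: "s > 0"
  shows "0 \<le> \<delta>"
proof -
  define e where "e = (\<lambda>j. if j = j0 then 1 else (0::real))"
  have "{j. e j \<noteq> 0} = {j0}" unfolding e_def by auto
  then have card: "card {j. e j \<noteq> 0} \<le> s" using s by simp
  have "(L2_set e (-T))\<^sup>2 = (\<Sum>j\<in>-T. if j = j0 then 1 else 0)"
    unfolding power2_L2_set e_def by (rule sum.cong) auto
  also have "\<dots> = 1" using j0 by simp
  finally have "(L2_set e (-T))\<^sup>2 = 1" .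
  moreover have "\<forall>j\<in>T. e j = 0" using j0 unfolding e_def by auto
  ultimately show ?thesis using partial_RIC_okD[OF ok cT _ card] by fastforce
qed

lemma norm_colcomb_le:
  assumes "\<forall>j\<in>S. \<bar>b j\<bar> \<le> c"
  shows "norm (colcomb A S b) \<le> c * (\<Sum>j\<in>S. norm (column j A))"
proof -
  have "norm (colcomb A S b) \<le> (\<Sum>j\<in>S. \<bar>b j\<bar> * norm (column j A))"
    unfolding colcomb_def by (rule norm_sum[THEN order_trans]) simp
  also have "\<dots> \<le> (\<Sum>j\<in>S. c * norm (column j A))"
    using assms by (intro sum_mono mult_right_mono) auto
  finally show ?thesis by (simp add: sum_distrib_left)
qed

text \<open>A crude but explicit admissible constant, so that the infimum defining the partial RIC is
  taken over a nonempty set.\<close>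
lemma partial_RIC_ok_large:
  fixes A :: "real^'m^'n"
  assumes ex: "partial_RIC_exists A k"
  shows "partial_RIC_ok A k s (max 1 ((\<Sum>j\<in>UNIV. norm (column j A))\<^sup>2))"
proof -
  define K where "K = (\<Sum>j\<in>UNIV. norm (column j A))"
  have "(1 - max 1 (K\<^sup>2)) * (L2_set b (-T))\<^sup>2 \<le> (norm (perp_colcomb A T b))\<^sup>2 \<and>
      (norm (perp_colcomb A T b))\<^sup>2 \<le> (1 + max 1 (K\<^sup>2)) * (L2_set b (-T))\<^sup>2"
    if cT: "card T = k" for T :: "'m set" and b
  proof
    show "(1 - max 1 (K\<^sup>2)) * (L2_set b (-T))\<^sup>2 \<le> (norm (perp_colcomb A T b))\<^sup>2"
      by (rule order_trans[of _ 0]) (auto intro: mult_nonpos_nonneg)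
    have fr: "full_col_rank A T" using ex cT unfolding partial_RIC_exists_def by blast
    have "\<forall>j\<in>-T. \<bar>b j\<bar> \<le> L2_set b (-T)"
      using member_le_L2_set[of "-T" _ "\<lambda>j. \<bar>b j\<bar>"] by (simp add: L2_set_def)
    then have "norm (colcomb A (-T) b) \<le> L2_set b (-T) * K"
      unfolding K_def
      by (rule norm_colcomb_le[THEN order_trans], intro mult_left_mono sum_mono2) auto
    then have "norm (perp_colcomb A T b) \<le> L2_set b (-T) * K"
      unfolding perp_colcomb_def using norm_proj_perp_le[OF fr] order_trans by blast
    then have "(norm (perp_colcomb A T b))\<^sup>2 \<le> (L2_set b (-T) * K)\<^sup>2"
      by (rule power_mono) simp
    also have "\<dots> = K\<^sup>2 * (L2_set b (-T))\<^sup>2" by (simp add: power_mult_distrib)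
    also have "\<dots> \<le> (1 + max 1 (K\<^sup>2)) * (L2_set b (-T))\<^sup>2" by (intro mult_right_mono) auto
    finally show "(norm (perp_colcomb A T b))\<^sup>2 \<le> (1 + max 1 (K\<^sup>2)) * (L2_set b (-T))\<^sup>2" .
  qed
  then show ?thesis
    unfolding partial_RIC_ok_def K_def[symmetric] perp_colcomb_def[symmetric] power2_L2_set[symmetric]
    by blast
qed

lemma exists_partial_RIC_ok_less:
  fixes A :: "real^'m^'n" and T :: "'m set"
  assumes ex: "partial_RIC_exists A k" and less: "partial_RIC A k s < c"
    and cT: "card T = k" and j0: "j0 \<notin> T" and s: "s > 0"
  shows "\<exists>\<delta>. partial_RIC_ok A k s \<delta> \<and> 0 \<le> \<delta> \<and> \<delta> < c"
proof -
  let ?D = "{\<delta>. partial_RIC_ok A k s \<delta>}"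
  have "?D \<noteq> {}" using partial_RIC_ok_large[OF ex] by blast
  moreover have "bdd_below ?D"
    using partial_RIC_ok_nonneg[OF _ cT j0 s] by (intro bdd_belowI[of _ 0]) auto
  ultimately obtain \<delta> where "\<delta> \<in> ?D" "\<delta> < c"
    using less unfolding partial_RIC_def by (auto simp: cInf_less_iff)
  then show ?thesis using partial_RIC_ok_nonneg[OF _ cT j0 s] by blast
qed

lemma less_of_mult_le_mult:
  fixes a b c d :: real
  assumes le: "d * a \<le> c * b" and "c < d" "0 \<le> c" "0 \<le> a" "0 \<le> b" "0 < a + b"
  shows "a < b"
proof (cases "b = 0")
  case True
  then show ?thesis using assms by (simp add: mult_le_0_iff)
next
  case False
  then have "c * b < d * b" using assms by (intro mult_strict_right_mono) auto
  then have "d * a < d * b" using le by linarith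
  then show ?thesis using assms by (simp add: mult_less_cancel_left)
qed

lemma sum_abs_less_complement:
  fixes A :: "real^'m^'n" and h :: "'m \<Rightarrow> real"
  assumes ex: "partial_RIC_exists A k" and ric: "partial_RIC A k (2 * card S) < sqrt 2 - 1"
    and cT: "card T = k" and S: "S \<subseteq> -T"
    and null: "perp_colcomb A T h = 0" and nonzero: "\<exists>j\<in>-T. h j \<noteq> 0"
  shows "(\<Sum>j\<in>S. \<bar>h j\<bar>) < (\<Sum>j\<in>-T - S. \<bar>h j\<bar>)"
proof -
  have "(\<Sum>j\<in>-T. \<bar>h j\<bar>) > 0"
    using nonzero by (auto intro: sum_pos2)
  moreover have "(\<Sum>j\<in>-T. \<bar>h j\<bar>) = (\<Sum>j\<in>S. \<bar>h j\<bar>) + (\<Sum>j\<in>-T - S. \<bar>h j\<bar>)"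
    using S by (simp add: sum.subset_diff[of S "-T"])
  ultimately have pos: "(\<Sum>j\<in>S. \<bar>h j\<bar>) + (\<Sum>j\<in>-T - S. \<bar>h j\<bar>) > 0" by simp
  show ?thesis
  proof (cases "S = {}")
    case True
    then show ?thesis using pos by simp
  next
    case False
    then obtain j0 where j0: "j0 \<in> S" by blast
    have s: "2 * card S > 0" using False by (simp add: card_gt_0_iff)
    obtain \<delta> where ok: "partial_RIC_ok A k (2 * card S) \<delta>" and \<delta>: "0 \<le> \<delta>" "\<delta> < sqrt 2 - 1"
      using exists_partial_RIC_ok_less[OF ex ric cT _ s, of j0] j0 S by blast
    have fr: "full_col_rank A T" using ex cT unfolding partial_RIC_exists_def by blast
    have "sqrt 2 < 2" by (simp add: real_less_lsqrt)
    then have "\<delta> < 1" using \<delta> by linarith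
    from null_space_property[OF fr ok cT \<delta>(1) less_imp_le[OF this] _ S order_refl null]
    have nsp: "(1 - \<delta>) * (\<Sum>j\<in>S. \<bar>h j\<bar>) \<le> sqrt 2 * \<delta> * (\<Sum>j\<in>-T - S. \<bar>h j\<bar>)"
      using False by (simp add: card_gt_0_iff)
    have "sqrt 2 * \<delta> < 1 - \<delta>"
    proof -
      have "(sqrt 2 + 1) * \<delta> < (sqrt 2 + 1) * (sqrt 2 - 1)"
        using \<delta> by (intro mult_strict_left_mono) auto
      then show ?thesis by (simp add: algebra_simps)
    qed
    then show ?thesis
      using less_of_mult_le_mult[OF nsp] pos \<delta>(1) by (simp add: sum_nonneg)
  qed
qed

lemma sum_abs_less_of_sum_abs_diff_less:
  fixes x b :: "'a \<Rightarrow> real"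
  assumes fin: "finite U" and S: "S \<subseteq> U" and x: "\<forall>j\<in>U - S. x j = 0"
    and less: "(\<Sum>j\<in>S. \<bar>b j - x j\<bar>) < (\<Sum>j\<in>U - S. \<bar>b j - x j\<bar>)"
  shows "(\<Sum>j\<in>U. \<bar>x j\<bar>) < (\<Sum>j\<in>U. \<bar>b j\<bar>)"
proof -
  have "(\<Sum>j\<in>U. \<bar>x j\<bar>) = (\<Sum>j\<in>S. \<bar>x j\<bar>)"
    using fin S x by (intro sum.mono_neutral_right) auto
  also have "\<dots> \<le> (\<Sum>j\<in>S. \<bar>b j\<bar>) + (\<Sum>j\<in>S. \<bar>b j - x j\<bar>)"
    by (simp add: sum.distrib[symmetric] sum_mono abs_triangle_ineq3 abs_minus_commute)
  also have "\<dots> < (\<Sum>j\<in>S. \<bar>b j\<bar>) + (\<Sum>j\<in>U - S. \<bar>b j\<bar>)"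
    using less x by simp
  also have "\<dots> = (\<Sum>j\<in>U. \<bar>b j\<bar>)" using fin S by (simp add: sum.subset_diff[of S U])
  finally show ?thesis .
qed

lemma null_vector_eq_0:
  fixes A :: "real^'m^'n"
  assumes fr: "full_col_rank A T" and h: "A *v h = 0" and supp: "\<forall>j\<in>-T. h $ j = 0"
  shows "h = 0"
proof -
  have "colcomb A (-T) (\<lambda>j. h $ j) = colcomb A (-T) (\<lambda>j. 0)"
    using supp by (intro colcomb_cong) auto
  then have "colcomb A T (\<lambda>j. h $ j) = 0"
    using h unfolding matrix_vector_mult_eq_colcomb colcomb_UNIV_split[of A _ T] by simp
  then have "\<forall>j\<in>T. h $ j = 0" using fr unfolding full_col_rank_def by blast
  with supp show ?thesis by (metis ComplI vec_eq_iff zero_index)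
qed

theorem mainTheorem2:
  fixes A :: "real^'m^'n" and x :: "real^'m" and T :: "'m set" and k u :: nat
  assumes "card T = k"
    and "u = card ({j. x $ j \<noteq> 0} - T)"
    and "partial_RIC_exists A k"
    and "partial_RIC A k (2 * u) < sqrt 2 - 1"
  shows "\<forall>b::real^'m. A *v b = A *v x \<longrightarrow> b \<noteq> x \<longrightarrow>
           (\<Sum>j\<in>-T. \<bar>x $ j\<bar>) < (\<Sum>j\<in>-T. \<bar>b $ j\<bar>)"
proof (intro allI impI)
  fix b :: "real^'m"
  assume "A *v b = A *v x" and "b \<noteq> x"
  define S where "S = {j. x $ j \<noteq> 0} - T"
  have fr: "full_col_rank A T" using assms(1,3) unfolding partial_RIC_exists_def by blast
  have null: "A *v (b - x) = 0"
    using \<open>A *v b = A *v x\<close> by (simp add: matrix_vector_mult_diff_distrib)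
  then have "\<exists>j\<in>-T. (b - x) $ j \<noteq> 0" using null_vector_eq_0[OF fr] \<open>b \<noteq> x\<close> by force
  moreover have "perp_colcomb A T (\<lambda>j. (b - x) $ j) = 0" by (rule perp_colcomb_null_vector[OF fr null])
  moreover have "partial_RIC A k (2 * card S) < sqrt 2 - 1" using assms(2,4) unfolding S_def by simp
  ultimately have "(\<Sum>j\<in>S. \<bar>(b - x) $ j\<bar>) < (\<Sum>j\<in>-T - S. \<bar>(b - x) $ j\<bar>)"
    using sum_abs_less_complement[OF assms(3) _ assms(1)] unfolding S_def by blast
  then show "(\<Sum>j\<in>-T. \<bar>x $ j\<bar>) < (\<Sum>j\<in>-T. \<bar>b $ j\<bar>)"
    by (intro sum_abs_less_of_sum_abs_diff_less[where S = S]) (auto simp: S_def)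
qed

end
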